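(* Let $N\ge2$ be an integer and let $\sigma$ be a finite set of functions $\mathbb{Z}_2\to\mathbb{Z}_N$ that is totally indistinguishable. Let $G(\sigma)$ be the simple undirected graph whose vertex set is $\sigma$, in which two distinct functions $f,g\in\sigma$ are adjacent iff $f(0)=g(0)$ or $f(1)=g(1)$. Then every connected component of $G(\sigma)$ contains an induced subgraph which is a cycle of even length at least $4$.
   Context: A set $\sigma$ of functions $\mathbb{Z}_M\to\mathbb{Z}_N$ is totally indistinguishable if for every $x\in\mathbb{Z}_M$ and every $f\in\sigma$ there exists $f'\in\sigma$ with $f'\neq f$ and $f'(x)=f(x)$. *)

theory Defs
  imports "HOL-Library.FuncSet"
begin

text \<open>Functions Z_2 -> Z_N are modelled as extensional functions
  in PiE {0..<2} (%_. {0..<N}) (values outside the domain are undefined).\<close>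

definition zfuns :: "nat \<Rightarrow> nat \<Rightarrow> (nat \<Rightarrow> nat) set" where
  "zfuns M N = {0..<M} \<rightarrow>\<^sub>E {0..<N}"

definition totally_indistinguishable :: "nat \<Rightarrow> (nat \<Rightarrow> nat) set \<Rightarrow> bool" where
  "totally_indistinguishable M \<sigma> \<longleftrightarrow>
     (\<forall>x\<in>{0..<M}. \<forall>f\<in>\<sigma>. \<exists>f'\<in>\<sigma>. f' \<noteq> f \<and> f' x = f x)"

definition G_adj :: "(nat \<Rightarrow> nat) set \<Rightarrow> (nat \<Rightarrow> nat) \<Rightarrow> (nat \<Rightarrow> nat) \<Rightarrow> bool" where
  "G_adj \<sigma> f g \<longleftrightarrow> f \<in> \<sigma> \<and> g \<in> \<sigma> \<and> f \<noteq> g \<and> (f 0 = g 0 \<or> f 1 = g 1)"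

definition G_component :: "(nat \<Rightarrow> nat) set \<Rightarrow> (nat \<Rightarrow> nat) \<Rightarrow> (nat \<Rightarrow> nat) set" where
  "G_component \<sigma> v = {u. (G_adj \<sigma>)\<^sup>*\<^sup>* v u}"

definition G_induced_cycle :: "(nat \<Rightarrow> nat) set \<Rightarrow> (nat \<Rightarrow> nat) list \<Rightarrow> bool" where
  "G_induced_cycle \<sigma> cs \<longleftrightarrow> length cs \<ge> 3 \<and> distinct cs \<and> set cs \<subseteq> \<sigma> \<and>
     (\<forall>i<length cs. \<forall>j<length cs.
        G_adj \<sigma> (cs ! i) (cs ! j) \<longleftrightarrow>
          (j = Suc i mod length cs \<or> i = Suc j mod length cs))"

end

theory Submission
  imports Defs
begin

(* Read f as the edge {(0, f 0), (1, f 1)} of a bipartite graph B on {0,1} x Z_N. Distinct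
   functions give distinct edges, G(sigma) is the line graph of B, and total indistinguishability
   says that every vertex of B lying on an edge has degree at least 2. So a longest path of B
   ending at (0, v 0) cannot be extended at its other end w: a second edge at w leads back into
   the path and closes a cycle of B whose edges all lie in the component of v. The cycle is even
   because B is bipartite, and since B has no multiple edges its edges induce a cycle of the same
   length in the line graph. *)

definition fun_edge :: "(nat \<Rightarrow> nat) \<Rightarrow> (nat \<times> nat) set" where
  "fun_edge f = {(0, f 0), (1, f 1)}"

definition bip_adj :: "(nat \<Rightarrow> nat) set \<Rightarrow> nat \<times> nat \<Rightarrow> nat \<times> nat \<Rightarrow> bool" where
  "bip_adj \<sigma> u w \<longleftrightarrow> (\<exists>f\<in>\<sigma>. fun_edge f = {u, w})"

lemma G_adj_iff_fun_edges_meet: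
  "G_adj \<sigma> f g \<longleftrightarrow> f \<in> \<sigma> \<and> g \<in> \<sigma> \<and> f \<noteq> g \<and> fun_edge f \<inter> fun_edge g \<noteq> {}"
  by (auto simp: G_adj_def fun_edge_def)

lemma inj_on_fun_edge_zfuns: "inj_on fun_edge (zfuns 2 N)"
proof (rule inj_onI)
  fix f g assume f: "f \<in> zfuns 2 N" and g: "g \<in> zfuns 2 N" and "fun_edge f = fun_edge g"
  then have "f 0 = g 0" "f 1 = g 1"
    by (auto simp: fun_edge_def doubleton_eq_iff)
  then have "f x = g x" if "x \<in> {0..<2}" for x
    using that by (auto simp: less_2_cases_iff)
  with f g show "f = g"
    unfolding zfuns_def by (rule PiE_ext)
qed

lemma fst_bip_adj: "bip_adj \<sigma> u w \<Longrightarrow> fst u + fst w = 1"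
  by (auto simp: bip_adj_def fun_edge_def doubleton_eq_iff)

lemma totally_indistinguishable_second_edge:
  assumes "totally_indistinguishable 2 \<sigma>" "g \<in> \<sigma>" "w \<in> fun_edge g"
  obtains h where "h \<in> \<sigma>" "h \<noteq> g" "w \<in> fun_edge h"
proof -
  obtain x where x: "x < 2" "w = (x, g x)"
    using assms(3) by (auto simp: fun_edge_def)
  moreover obtain h where "h \<in> \<sigma>" "h \<noteq> g" "h x = g x"
    using assms(1,2) x(1) unfolding totally_indistinguishable_def by fastforce
  ultimately show thesis
    using that by (auto simp: fun_edge_def less_2_cases_iff)
qed

lemma set_subset_fun_edges_if_successively_bip_adj:
  "successively (bip_adj \<sigma>) ws \<Longrightarrow> 2 \<le> length ws \<Longrightarrow> set ws \<subseteq> \<Union> (fun_edge ` \<sigma>)"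
proof (induction ws rule: induct_list012)
  case (3 x y zs)
  then have "{x, y} \<subseteq> \<Union> (fun_edge ` \<sigma>)"
    by (auto simp: bip_adj_def)
  moreover have "set (y # zs) \<subseteq> \<Union> (fun_edge ` \<sigma>)" if "zs \<noteq> []"
    using 3 that by (simp add: Suc_le_eq)
  ultimately show ?case
    by (cases zs) auto
qed auto

lemma length_bip_path_le:
  assumes "finite \<sigma>" "distinct ws" "successively (bip_adj \<sigma>) ws" "2 \<le> length ws"
  shows "length ws \<le> card (\<Union> (fun_edge ` \<sigma>))"
proof -
  have "finite (\<Union> (fun_edge ` \<sigma>))"
    using assms(1) by (simp add: fun_edge_def)
  moreover have "set ws \<subseteq> \<Union> (fun_edge ` \<sigma>)"
    using assms(3,4) by (rule set_subset_fun_edges_if_successively_bip_adj)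
  ultimately show ?thesis
    using assms(2) by (metis card_mono distinct_card)
qed

lemma Suc_mod_inj: "i < n \<Longrightarrow> j < n \<Longrightarrow> Suc i mod n = Suc j mod n \<Longrightarrow> i = (j::nat)"
  by (auto simp: mod_Suc split: if_splits)

lemma Suc_mod_neq_self: "2 \<le> n \<Longrightarrow> i < n \<Longrightarrow> Suc i mod n \<noteq> (i::nat)"
  by (auto simp: mod_Suc)

lemma Suc_mod_not_involutive:
  "3 \<le> n \<Longrightarrow> i < n \<Longrightarrow> j = Suc i mod n \<Longrightarrow> i \<noteq> Suc j mod (n::nat)"
  by (auto simp: mod_Suc split: if_splits)

lemma cyclic_edges_meet_iff:
  assumes "distinct s" "i < length s" "j < length s"
  shows "{s!i, s!(Suc i mod length s)} \<inter> {s!j, s!(Suc j mod length s)} \<noteq> {}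
    \<longleftrightarrow> i = j \<or> j = Suc i mod length s \<or> i = Suc j mod length s"
proof -
  have "s \<noteq> []" using assms(2) by auto
  then show ?thesis
    using assms by (auto simp: nth_eq_iff_index_eq dest: Suc_mod_inj)
qed

lemma even_if_cyclic_two_colouring:
  fixes c :: "nat \<Rightarrow> bool"
  assumes "0 < n" and alternating: "\<forall>i<n. c (Suc i mod n) \<noteq> c i"
  shows "even n"
proof -
  have colour: "c i = (c 0 = even i)" if "i < n" for i
    using that
  proof (induction i)
    case (Suc i)
    then show ?case using alternating[rule_format, of i] by auto
  qed simp
  have "c 0 \<noteq> c (n - 1)"
    using alternating[rule_format, of "n - 1"] assms(1) by simp
  then have "odd (n - 1)"
    using colour[of "n - 1"] assms(1) by auto
  with assms(1) show "even n" by simp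
qed

lemma cyclic_edges_eq_iff:
  assumes "distinct s" "3 \<le> length s" "i < length s" "j < length s"
  shows "{s!i, s!(Suc i mod length s)} = {s!j, s!(Suc j mod length s)} \<longleftrightarrow> i = j"
proof
  assume eq: "{s!i, s!(Suc i mod length s)} = {s!j, s!(Suc j mod length s)}"
  have s_nth_eq_iff: "s!k = s!l \<longleftrightarrow> k = l" if "k < length s" "l < length s" for k l
    using assms(1) that by (simp add: nth_eq_iff_index_eq)
  have "s \<noteq> []"
    using assms(2) by auto
  then have succ_less: "Suc k mod length s < length s" for k
    by simp
  show "i = j"
  proof (rule ccontr)
    assume "i \<noteq> j"
    with eq have "s!i = s!(Suc j mod length s)" "s!(Suc i mod length s) = s!j"
      using s_nth_eq_iff assms(3,4) by (auto simp: doubleton_eq_iff)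
    then have "i = Suc j mod length s" "Suc i mod length s = j"
      using s_nth_eq_iff succ_less assms(3,4) by simp_all
    then show False
      using Suc_mod_not_involutive assms(2-4) by metis
  qed
qed simp

lemma even_length_bip_cycle:
  assumes "s \<noteq> []" "\<forall>i<length s. bip_adj \<sigma> (s!i) (s!(Suc i mod length s))"
  shows "even (length s)"
proof (rule even_if_cyclic_two_colouring)
  show "\<forall>i<length s. (fst (s!(Suc i mod length s)) = 0) \<noteq> (fst (s!i) = 0)"
    using assms(2) fst_bip_adj by fastforce
qed (use assms(1) in simp)

lemma G_induced_cycle_of_bip_cycle:
  assumes "distinct s" and "3 \<le> length s"
    and cyclic: "\<forall>i<length s. bip_adj \<sigma> (s!i) (s!(Suc i mod length s))"
  obtains cs where "G_induced_cycle \<sigma> cs" "even (length cs)" "\<forall>c\<in>set cs. fun_edge c \<subseteq> set s"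
proof -
  define n where "n = length s"
  obtain F where F: "\<forall>i<n. F i \<in> \<sigma> \<and> fun_edge (F i) = {s!i, s!(Suc i mod n)}"
    using cyclic unfolding bip_adj_def n_def by metis
  have n3: "3 \<le> n" using assms(2) n_def by simp
  have F_inj: "i = j" if "i < n" "j < n" "F i = F j" for i j
    using that F cyclic_edges_eq_iff[OF assms(1,2)] n_def by metis
  define cs where "cs = map F [0..<n]"
  have "G_adj \<sigma> (cs!i) (cs!j) \<longleftrightarrow> j = Suc i mod n \<or> i = Suc j mod n"
    if ij: "i < n" "j < n" for i j
  proof -
    have "G_adj \<sigma> (cs!i) (cs!j) \<longleftrightarrow> i \<noteq> j \<and> fun_edge (F i) \<inter> fun_edge (F j) \<noteq> {}"
      using G_adj_iff_fun_edges_meet F F_inj ij cs_def by auto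
    also have "\<dots> \<longleftrightarrow> j = Suc i mod n \<or> i = Suc j mod n"
    proof -
      have "i \<noteq> j" if "j = Suc i mod n \<or> i = Suc j mod n"
        using that Suc_mod_neq_self[of n] n3 ij by fastforce
      then show ?thesis
        using cyclic_edges_meet_iff[OF assms(1)] F ij n_def by auto
    qed
    finally show ?thesis .
  qed
  moreover have "distinct cs"
    using F_inj by (auto simp: cs_def distinct_map inj_on_def)
  moreover have "set cs \<subseteq> \<sigma>" "length cs = n"
    using F by (auto simp: cs_def)
  ultimately have "G_induced_cycle \<sigma> cs"
    using n3 by (auto simp: G_induced_cycle_def)
  moreover have "even n"
    using even_length_bip_cycle[OF _ cyclic] assms(2) n_def by fastforce
  moreover have "\<forall>c\<in>set cs. fun_edge c \<subseteq> set s"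
  proof -
    have "s!k \<in> set s" if "k < n" for k
      using that n_def by simp
    moreover have "Suc k mod n < n" for k
      using n3 by simp
    ultimately show ?thesis
      using F by (auto simp: cs_def)
  qed
  ultimately show thesis
    using that \<open>length cs = n\<close> by simp
qed

lemma G_component_fun_edge_meet:
  assumes "f \<in> G_component \<sigma> v" "f \<in> \<sigma>" "g \<in> \<sigma>" "fun_edge f \<inter> fun_edge g \<noteq> {}"
  shows "g \<in> G_component \<sigma> v"
proof (cases "f = g")
  case False
  then have "G_adj \<sigma> f g"
    using assms(2-) by (simp add: G_adj_iff_fun_edges_meet)
  with assms(1) show ?thesis
    unfolding G_component_def by (simp add: rtranclp.rtrancl_into_rtrancl)
qed (use assms(1) in simp)

lemma G_component_if_meets_bip_path:
  assumes "v \<in> \<sigma>" "successively (bip_adj \<sigma>) ws" "ws \<noteq> []" "last ws \<in> fun_edge v"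
    and "w \<in> set ws" "g \<in> \<sigma>" "w \<in> fun_edge g"
  shows "g \<in> G_component \<sigma> v"
  using assms(2-)
proof (induction ws arbitrary: w g)
  case (Cons x ws)
  show ?case
  proof (cases "ws = []")
    case True
    with Cons.prems have "fun_edge v \<inter> fun_edge g \<noteq> {}"
      by auto
    then show ?thesis
      using G_component_fun_edge_meet[OF _ assms(1) Cons.prems(5)]
      by (simp add: G_component_def)
  next
    case False
    with Cons.prems have path: "successively (bip_adj \<sigma>) ws" "last ws \<in> fun_edge v"
      and "bip_adj \<sigma> x (hd ws)"
      by (auto simp: successively_Cons)
    then obtain f where f: "f \<in> \<sigma>" "fun_edge f = {x, hd ws}"
      unfolding bip_adj_def by blast
    note IH = Cons.IH[OF path(1) False path(2)]
    show ?thesis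
    proof (cases "w \<in> set ws")
      case True
      then show ?thesis
        using IH Cons.prems(5,6) by blast
    next
      case False
      with Cons.prems(4) f(2) have "x \<in> fun_edge f \<inter> fun_edge g"
        using Cons.prems(6) by auto
      moreover have "f \<in> G_component \<sigma> v"
        using IH[of "hd ws" f] f \<open>ws \<noteq> []\<close> by simp
      ultimately show ?thesis
        using G_component_fun_edge_meet[OF _ f(1) Cons.prems(5)] by blast
    qed
  qed
qed simp

lemma bip_adj_other_neighbour:
  assumes "inj_on fun_edge \<sigma>" "totally_indistinguishable 2 \<sigma>" "bip_adj \<sigma> w w2"
  obtains w' where "bip_adj \<sigma> w' w" "w' \<noteq> w" "w' \<noteq> w2"
proof -
  obtain g where g: "g \<in> \<sigma>" "fun_edge g = {w, w2}"
    using assms(3) unfolding bip_adj_def by blast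
  then obtain h where h: "h \<in> \<sigma>" "h \<noteq> g" "w \<in> fun_edge h"
    using totally_indistinguishable_second_edge[OF assms(2)] by blast
  then obtain w' where w': "fun_edge h = {w, w'}"
    unfolding fun_edge_def by blast
  then have "bip_adj \<sigma> w' w"
    using h(1) by (auto simp: bip_adj_def insert_commute)
  moreover have "w' \<noteq> w"
  proof
    assume "w' = w"
    with fst_bip_adj[OF \<open>bip_adj \<sigma> w' w\<close>] show False
      by simp presburger
  qed
  moreover have "w' \<noteq> w2"
    using assms(1) g h w' by (auto simp: inj_on_def)
  ultimately show thesis
    by (rule that)
qed

lemma successively_take_cyclic:
  assumes "successively R xs" "j < length xs" "R (xs!j) (xs!0)"
  shows "\<forall>i<Suc j. R (take (Suc j) xs ! i) (take (Suc j) xs ! (Suc i mod Suc j))"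
proof (intro allI impI)
  fix i assume "i < Suc j"
  show "R (take (Suc j) xs ! i) (take (Suc j) xs ! (Suc i mod Suc j))"
  proof (cases "i = j")
    case True
    with assms(3) show ?thesis
      by simp
  next
    case False
    with \<open>i < Suc j\<close> assms(1,2) show ?thesis
      by (simp add: successively_nth)
  qed
qed

lemma bip_cycle_in_G_component:
  assumes "finite \<sigma>" "inj_on fun_edge \<sigma>" "totally_indistinguishable 2 \<sigma>" "v \<in> \<sigma>"
  obtains s where "distinct s" "3 \<le> length s"
    "\<forall>i<length s. bip_adj \<sigma> (s!i) (s!(Suc i mod length s))"
    "\<forall>g\<in>\<sigma>. fun_edge g \<inter> set s \<noteq> {} \<longrightarrow> g \<in> G_component \<sigma> v"
proof -
  define path where "path ws \<longleftrightarrow> distinct ws \<and> successively (bip_adj \<sigma>) ws \<and> 2 \<le> length ws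
    \<and> last ws = (0, v 0)" for ws
  have start: "path [(1, v 1), (0, v 0)]"
    using assms(4) by (auto simp: path_def bip_adj_def fun_edge_def)
  have bounded: "\<forall>ws. path ws \<longrightarrow> length ws < Suc (card (\<Union> (fun_edge ` \<sigma>)))"
    using length_bip_path_le[OF assms(1)] unfolding path_def by (simp add: less_Suc_eq_le)
  obtain ws where "path ws" and longest: "\<forall>ys. path ys \<longrightarrow> length ys \<le> length ws"
    using ex_has_greatest_nat[OF start bounded] by blast
  then obtain w w2 rest where ws: "ws = w # w2 # rest"
    unfolding path_def by (auto simp: Suc_le_length_iff numeral_2_eq_2)
  with \<open>path ws\<close> have "bip_adj \<sigma> w w2"
    unfolding path_def by simp
  then obtain w' where "bip_adj \<sigma> w' w" "w' \<noteq> w" "w' \<noteq> w2"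
    using bip_adj_other_neighbour[OF assms(2,3)] by blast
  have "w' \<in> set ws"
  proof (rule ccontr)
    assume "w' \<notin> set ws"
    then have "path (w' # ws)"
      using \<open>path ws\<close> \<open>bip_adj \<sigma> w' w\<close> by (auto simp: path_def ws)
    then show False
      using longest by auto
  qed
  then obtain j where j: "j < length ws" "ws!j = w'"
    by (auto simp: in_set_conv_nth)
  have "ws!0 = w" "ws!1 = w2"
    by (simp_all add: ws)
  with j(2) \<open>w' \<noteq> w\<close> \<open>w' \<noteq> w2\<close> have "j \<noteq> 0" "j \<noteq> 1"
    by metis+
  show thesis
  proof (rule that)
    show "distinct (take (Suc j) ws)"
      using \<open>path ws\<close> by (simp add: path_def)
    show "3 \<le> length (take (Suc j) ws)"
      using j(1) \<open>j \<noteq> 0\<close> \<open>j \<noteq> 1\<close> by simp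
    show "\<forall>i<length (take (Suc j) ws).
        bip_adj \<sigma> (take (Suc j) ws ! i) (take (Suc j) ws ! (Suc i mod length (take (Suc j) ws)))"
      using successively_take_cyclic[of "bip_adj \<sigma>" ws j] \<open>path ws\<close> j \<open>bip_adj \<sigma> w' w\<close> \<open>ws!0 = w\<close>
      by (simp add: path_def)
    show "\<forall>g\<in>\<sigma>. fun_edge g \<inter> set (take (Suc j) ws) \<noteq> {} \<longrightarrow> g \<in> G_component \<sigma> v"
    proof (intro ballI impI)
      fix g assume "g \<in> \<sigma>" "fun_edge g \<inter> set (take (Suc j) ws) \<noteq> {}"
      then obtain u where "u \<in> fun_edge g" "u \<in> set ws"
        using set_take_subset[of "Suc j" ws] by blast
      moreover have "successively (bip_adj \<sigma>) ws" "ws \<noteq> []" "last ws \<in> fun_edge v"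
        using \<open>path ws\<close> by (auto simp: path_def fun_edge_def)
      ultimately show "g \<in> G_component \<sigma> v"
        using G_component_if_meets_bip_path[OF assms(4)] \<open>g \<in> \<sigma>\<close> by blast
    qed
  qed
qed

theorem theorem6:
  fixes N :: nat and \<sigma> :: "(nat \<Rightarrow> nat) set"
  assumes "N \<ge> 2"
    and "\<sigma> \<subseteq> zfuns 2 N"
    and "finite \<sigma>"
    and "totally_indistinguishable 2 \<sigma>"
  shows "\<forall>v\<in>\<sigma>. \<exists>cs. G_induced_cycle \<sigma> cs \<and> set cs \<subseteq> G_component \<sigma> v
            \<and> even (length cs) \<and> length cs \<ge> 4"
proof
  fix v assume "v \<in> \<sigma>"
  have "inj_on fun_edge \<sigma>"
    using inj_on_fun_edge_zfuns assms(2) by (rule inj_on_subset)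
  obtain s where s: "distinct s" "3 \<le> length s"
    "\<forall>i<length s. bip_adj \<sigma> (s!i) (s!(Suc i mod length s))"
    "\<forall>g\<in>\<sigma>. fun_edge g \<inter> set s \<noteq> {} \<longrightarrow> g \<in> G_component \<sigma> v"
    using assms(3) \<open>inj_on fun_edge \<sigma>\<close> assms(4) \<open>v \<in> \<sigma>\<close>
    by (rule bip_cycle_in_G_component)
  obtain cs where cs: "G_induced_cycle \<sigma> cs" "even (length cs)"
    "\<forall>c\<in>set cs. fun_edge c \<subseteq> set s"
    using s(1-3) by (rule G_induced_cycle_of_bip_cycle)
  have "3 \<le> length cs" "set cs \<subseteq> \<sigma>"
    using cs(1) unfolding G_induced_cycle_def by blast+
  have "set cs \<subseteq> G_component \<sigma> v"
  proof
    fix c assume "c \<in> set cs"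
    then have "fun_edge c \<inter> set s \<noteq> {}"
      using cs(3) by (auto simp: fun_edge_def)
    with s(4) \<open>c \<in> set cs\<close> \<open>set cs \<subseteq> \<sigma>\<close> show "c \<in> G_component \<sigma> v"
      by blast
  qed
  moreover have "4 \<le> length cs"
    using \<open>3 \<le> length cs\<close> cs(2) by presburger
  ultimately show "\<exists>cs. G_induced_cycle \<sigma> cs \<and> set cs \<subseteq> G_component \<sigma> v
      \<and> even (length cs) \<and> length cs \<ge> 4"
    using cs by blast
qed

end
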